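(* Let $n$ be a positive integer and $w_1\le\dots\le w_m$ a feasible partition of $n$ with partial sums $R_i=w_1+\dots+w_i$, $R_0=0$. Then for every $1\le i\le m$, $R_{i-1} \ge \frac{R_i-1}{3}$.
   Context: A weighing partition of a positive integer $n$ is a multiset of positive integers summing to $n$ such that every integer $\ell$ with $1\le\ell\le n$ is a sum $\sum_j u_jw_j$ with $u_j\in\{-1,0,1\}$. A feasible partition of $n$ is a weighing partition of $n$ whose number of parts $m$ is minimal among all weighing partitions of $n$, written $w_1\le\dots\le w_m$. *)

theory Defs
  imports Complex_Main
begin

definition weighing_partition :: "nat \<Rightarrow> nat list \<Rightarrow> bool" where
  "weighing_partition n ws \<longleftrightarrow>
     (\<forall>w\<in>set ws. 0 < w) \<and> sum_list ws = n \<and>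
     (\<forall>l\<in>{1..n}. \<exists>u::nat \<Rightarrow> int.
        (\<forall>j<length ws. u j \<in> {-1, 0, 1}) \<and>
        int l = (\<Sum>j<length ws. u j * int (ws ! j)))"

definition feasible_partition :: "nat \<Rightarrow> nat list \<Rightarrow> bool" where
  "feasible_partition n ws \<longleftrightarrow>
     sorted ws \<and> weighing_partition n ws \<and>
     (\<forall>vs. weighing_partition n vs \<longrightarrow> length ws \<le> length vs)"

definition partial_sum :: "nat list \<Rightarrow> nat \<Rightarrow> nat" where
  "partial_sum ws i = sum_list (take i ws)"

end

theory Submission
  imports Defs
begin

text \<open>Sortedness and the weighing property already force \<open>w\<^sub>i \<le> 2 R\<^sub>i\<^sub>-\<^sub>1 + 1\<close>. Subtracting a signed representation of \<open>n - m\<close> from \<open>n = \<Sum> w\<^sub>j\<close>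
  writes every \<open>m < n\<close> as \<open>\<Sum> c\<^sub>j w\<^sub>j\<close> with \<open>c\<^sub>j \<in> {0,1,2}\<close>. Such a sum either uses no part
  from position \<open>i\<close> on, and is then at most \<open>2 R\<^sub>i\<^sub>-\<^sub>1\<close>, or it is at least \<open>w\<^sub>i\<close>.
  So \<open>m = 2 R\<^sub>i\<^sub>-\<^sub>1 + 1\<close> can only be represented if \<open>w\<^sub>i \<le> 2 R\<^sub>i\<^sub>-\<^sub>1 + 1\<close>, and it
  is below \<open>n\<close> whenever \<open>w\<^sub>i\<close> exceeds that bound.\<close>

lemma weighing_partition_nonneg_repr:
  assumes wp: "weighing_partition n ws" and "m < n"
  shows "\<exists>c::nat \<Rightarrow> nat. (\<forall>j<length ws. c j \<le> 2) \<and> m = (\<Sum>j<length ws. c j * ws ! j)"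
proof -
  have "n - m \<in> {1..n}" using \<open>m < n\<close> by auto
  then obtain u :: "nat \<Rightarrow> int" where u: "\<forall>j<length ws. u j \<in> {-1, 0, 1}"
    and u_repr: "int (n - m) = (\<Sum>j<length ws. u j * int (ws ! j))"
    using wp unfolding weighing_partition_def by blast
  have n_sum: "int n = (\<Sum>j<length ws. int (ws ! j))"
    using wp unfolding weighing_partition_def by (auto simp: sum_list_sum_nth atLeast0LessThan)
  define c where "c j = nat (1 - u j)" for j
  have c_int: "int (c j) = 1 - u j" if "j < length ws" for j
    using u that unfolding c_def by auto
  have "int m = int n - int (n - m)" using \<open>m < n\<close> by simp
  also have "\<dots> = (\<Sum>j<length ws. (1 - u j) * int (ws ! j))"
    using n_sum u_repr by (simp add: sum_subtractf algebra_simps)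
  also have "\<dots> = int (\<Sum>j<length ws. c j * ws ! j)"
    by (simp add: c_int)
  finally have "m = (\<Sum>j<length ws. c j * ws ! j)" by linarith
  moreover have "\<forall>j<length ws. c j \<le> 2" using u unfolding c_def by auto
  ultimately show ?thesis by blast
qed

lemma sorted_bounded_combination_gap:
  fixes ws :: "nat list" and c :: "nat \<Rightarrow> nat"
  assumes "sorted ws" and "k < length ws" and c_le: "\<forall>j<length ws. c j \<le> b"
  shows "(\<Sum>j<length ws. c j * ws ! j) \<le> b * sum_list (take k ws)
         \<or> ws ! k \<le> (\<Sum>j<length ws. c j * ws ! j)"
proof (cases "\<exists>j\<in>{k..<length ws}. c j \<noteq> 0")
  case True
  then obtain j where j: "k \<le> j" "j < length ws" "c j \<noteq> 0" by auto
  have "ws ! k \<le> ws ! j" using \<open>sorted ws\<close> j by (simp add: sorted_nth_mono)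
  also have "\<dots> \<le> c j * ws ! j" using j(3) by simp
  also have "\<dots> \<le> (\<Sum>j<length ws. c j * ws ! j)"
    by (rule member_le_sum) (use j in auto)
  finally show ?thesis ..
next
  case False
  have "(\<Sum>j<length ws. c j * ws ! j)
        = (\<Sum>j<k. c j * ws ! j) + (\<Sum>j\<in>{k..<length ws}. c j * ws ! j)"
    using sum.atLeastLessThan_concat[of 0 k "length ws" "\<lambda>j. c j * ws ! j"] \<open>k < length ws\<close>
    by (simp add: atLeast0LessThan)
  also have "\<dots> = (\<Sum>j<k. c j * ws ! j)" using False by simp
  also have "\<dots> \<le> (\<Sum>j<k. b * ws ! j)"
    by (rule sum_mono) (use c_le \<open>k < length ws\<close> in simp)
  also have "\<dots> = b * sum_list (take k ws)"
    using \<open>k < length ws\<close> by (simp add: sum_list_sum_nth atLeast0LessThan sum_distrib_left)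
  finally show ?thesis ..
qed

lemma weighing_partition_sorted_nth_le:
  assumes "sorted ws" and wp: "weighing_partition n ws" and "k < length ws"
  shows "ws ! k \<le> 2 * sum_list (take k ws) + 1"
proof -
  define R where "R = sum_list (take k ws)"
  have "sum_list ws = sum_list (take (Suc k) ws) + sum_list (drop (Suc k) ws)"
    by (simp flip: sum_list_append)
  then have n_ge: "R + ws ! k \<le> n"
    using wp \<open>k < length ws\<close>
    by (simp add: R_def weighing_partition_def take_Suc_conv_app_nth)
  show ?thesis
  proof (cases "2 * R + 1 < n")
    case True
    then obtain c where "\<forall>j<length ws. c j \<le> 2"
      and repr: "2 * R + 1 = (\<Sum>j<length ws. c j * ws ! j)"
      using weighing_partition_nonneg_repr[OF wp] by blast
    then have "2 * R + 1 \<le> 2 * R \<or> ws ! k \<le> 2 * R + 1"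
      using sorted_bounded_combination_gap[OF \<open>sorted ws\<close> \<open>k < length ws\<close>]
      unfolding R_def by metis
    then show ?thesis unfolding R_def by linarith
  next
    case False
    then show ?thesis using n_ge unfolding R_def by linarith
  qed
qed

theorem mainTheorem7:
  fixes n :: nat and ws :: "nat list"
  assumes "0 < n"
    and "feasible_partition n ws"
  shows "\<forall>i\<in>{1..length ws}.
           real (partial_sum ws (i - 1)) \<ge> (real (partial_sum ws i) - 1) / 3"
proof
  fix i assume "i \<in> {1..length ws}"
  then obtain k where k: "k < length ws" "i = Suc k" by (cases i) auto
  have "ws ! k \<le> 2 * partial_sum ws k + 1"
    using weighing_partition_sorted_nth_le[OF _ _ k(1)] assms(2)
    unfolding feasible_partition_def partial_sum_def by blast
  moreover have "partial_sum ws i = partial_sum ws k + ws ! k"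
    using k by (simp add: partial_sum_def take_Suc_conv_app_nth)
  ultimately show "real (partial_sum ws (i - 1)) \<ge> (real (partial_sum ws i) - 1) / 3"
    using k(2) by simp
qed

end
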